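(* Let $i,j\geq 1$ and $n\geq 1$ be integers. Let $U(i,j,n)$ be the set of all triples $(L_1,L_2,L_3)$ of lattice walks of length $n$ with steps $U=(1,1)$ and $D=(1,-1)$, where $L_1$ starts at $(0,0)$, $L_2$ starts at $(0,2i)$ and $L_3$ starts at $(0,2i+2j)$. Let $M_{12,23}(n)$ be the set of triples $(L_1,L_2,L_3)\in U(i,j,n)$ such that $L_2$ intersects both $L_1$ and $L_3$, and let $M_{13}(n)$ be the set of triples $(L_1,L_2,L_3)\in U(i,j,n)$ such that $L_1$ intersects $L_3$. Then there exists a bijection between $M_{12,23}(n)$ and $M_{13}(n)$.
   Context: A walk of length $n$ is a lattice path consisting of $n$ steps, each an up step $(1,1)$ or a down step $(1,-1)$. Two walks are said to intersect if they share a common lattice point. *)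

theory Defs
  imports Main
begin

(* A walk of length n is a list of n steps; True = up step (1,1), False = down step (1,-1). *)
definition walks :: "nat \<Rightarrow> bool list set" where
  "walks n = {w. length w = n}"

definition step_val :: "bool \<Rightarrow> int" where
  "step_val b = (if b then 1 else -1)"

definition height :: "int \<Rightarrow> bool list \<Rightarrow> nat \<Rightarrow> int" where
  "height h w t = h + (\<Sum>k<t. step_val (w ! k))"

definition points :: "int \<Rightarrow> bool list \<Rightarrow> (int \<times> int) set" where
  "points h w = {(int t, height h w t) | t. t \<le> length w}"

definition intersect :: "int \<Rightarrow> bool list \<Rightarrow> int \<Rightarrow> bool list \<Rightarrow> bool" where
  "intersect h1 w1 h2 w2 \<longleftrightarrow> points h1 w1 \<inter> points h2 w2 \<noteq> {}"

definition U :: "nat \<Rightarrow> nat \<Rightarrow> nat \<Rightarrow> (bool list \<times> bool list \<times> bool list) set" where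
  "U i j n = walks n \<times> walks n \<times> walks n"

definition M12_23 :: "nat \<Rightarrow> nat \<Rightarrow> nat \<Rightarrow> (bool list \<times> bool list \<times> bool list) set" where
  "M12_23 i j n = {(L1, L2, L3) \<in> U i j n.
      intersect 0 L1 (2 * int i) L2 \<and> intersect (2 * int i) L2 (2 * int i + 2 * int j) L3}"

definition M13 :: "nat \<Rightarrow> nat \<Rightarrow> nat \<Rightarrow> (bool list \<times> bool list \<times> bool list) set" where
  "M13 i j n = {(L1, L2, L3) \<in> U i j n. intersect 0 L1 (2 * int i + 2 * int j) L3}"

end

theory Submission
  imports Defs
begin

text \<open>Let t be the first time at which the middle walk meets one of its neighbours (the lower one
wins a tie), and exchange the tails after t of the two walks that meet there. The three walks are
unchanged up to t, so t and the choice of pair are the same for the image: the map is an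
involution. If L2 meets both neighbours, then after the exchange one outer walk follows the tail
of L2 past t, where L2 still meets the other outer walk; so the image lies in M13. Conversely, if
L1 meets L3 at u, then L2, which starts strictly between them at even distance, meets one of them
no later than u, and after the exchange the middle walk meets both.\<close>

definition meets :: "int \<Rightarrow> bool list \<Rightarrow> int \<Rightarrow> bool list \<Rightarrow> nat \<Rightarrow> bool" where
  "meets h1 x h2 y t \<longleftrightarrow> t \<le> length x \<and> t \<le> length y \<and> height h1 x t = height h2 y t"

definition swap_tail :: "nat \<Rightarrow> bool list \<Rightarrow> bool list \<Rightarrow> bool list" where
  "swap_tail p x y = take p x @ drop p y"

lemma intersect_iff_meets: "intersect h1 x h2 y \<longleftrightarrow> (\<exists>t. meets h1 x h2 y t)"
  unfolding intersect_def points_def meets_def by auto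

lemma meets_sym: "meets h1 x h2 y t \<longleftrightarrow> meets h2 y h1 x t"
  unfolding meets_def by auto

lemma height_Suc: "height h w (Suc t) = height h w t + step_val (w ! t)"
  by (simp add: height_def)

lemma height_0 [simp]: "height h w 0 = h"
  by (simp add: height_def)

lemma height_diff_Suc_ge:
  "height h2 y t - height h1 x t - 2 \<le> height h2 y (Suc t) - height h1 x (Suc t)"
  by (simp add: height_Suc step_val_def)

lemma even_height_diff:
  assumes "even (h2 - h1)"
  shows "even (height h2 y t - height h1 x t)"
proof (induction t)
  case (Suc t)
  have "even (step_val (y ! t) - step_val (x ! t))"
    by (simp add: step_val_def)
  with Suc show ?case
    by (simp add: height_Suc algebra_simps)
qed (use assms in simp)

lemma height_eq_if_take_eq:
  assumes "take p x = take p y" "t \<le> p"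
  shows "height h x t = height h y t"
proof -
  have "x ! k = y ! k" if "k < t" for k
    using assms that by (metis less_le_trans nth_take)
  then show ?thesis
    by (simp add: height_def)
qed

lemma meets_eq_if_take_eq:
  assumes "take p x = take p x'" "take p y = take p y'"
    "length x = length x'" "length y = length y'" "t \<le> p"
  shows "meets h1 x h2 y t \<longleftrightarrow> meets h1 x' h2 y' t"
  using assms height_eq_if_take_eq unfolding meets_def by metis

lemma length_swap_tail:
  "p \<le> length x \<Longrightarrow> p \<le> length y \<Longrightarrow> length (swap_tail p x y) = length y"
  by (simp add: swap_tail_def)

lemma take_swap_tail: "p \<le> length x \<Longrightarrow> take p (swap_tail p x y) = take p x"
  by (simp add: swap_tail_def)

lemma swap_tail_swap_tail:
  "p \<le> length x \<Longrightarrow> p \<le> length y \<Longrightarrow> swap_tail p (swap_tail p x y) (swap_tail p y x) = x"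
  by (simp add: swap_tail_def)

lemma height_swap_tail_after:
  assumes "meets h1 x h2 y p" "p \<le> t"
  shows "height h1 (swap_tail p x y) t = height h2 y t"
  using assms(2)
proof (induction t rule: dec_induct)
  case base
  then show ?case
    using assms(1) height_eq_if_take_eq[OF take_swap_tail] by (simp add: meets_def)
next
  case (step t)
  have "swap_tail p x y ! t = y ! t"
    using assms(1) step.hyps by (simp add: swap_tail_def meets_def nth_append)
  with step.IH show ?case
    by (simp add: height_Suc)
qed

lemma meets_swap_tail_at:
  assumes "meets h1 x h2 y p"
  shows "meets h1 (swap_tail p x y) h2 (swap_tail p y x) p"
  using assms height_eq_if_take_eq[OF take_swap_tail, of p]
  by (simp add: meets_def length_swap_tail)

lemma zero_crossing_even_steps:
  fixes d :: "nat \<Rightarrow> int"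
  assumes "0 < d 0" "d u \<le> 0" "\<And>k. d k - 2 \<le> d (Suc k)" "\<And>k. even (d k)"
  shows "\<exists>k\<le>u. d k = 0"
  using assms(2)
proof (induction u)
  case (Suc u)
  show ?case
  proof (cases "d u \<le> 0")
    case True
    then show ?thesis
      using Suc.IH le_SucI by blast
  next
    case False
    with assms(4)[of u] have "2 \<le> d u"
      by presburger
    with assms(3)[of u] Suc.prems have "d (Suc u) = 0"
      by linarith
    then show ?thesis
      by blast
  qed
qed (use assms(1) in simp)

lemma Least_eq_if_agree_upto:
  fixes t :: nat
  assumes "P t" "\<And>s. s \<le> t \<Longrightarrow> P s \<longleftrightarrow> Q s"
  shows "Least P = Least Q"
proof (rule Least_equality[symmetric])
  have "Least P \<le> t"
    using assms(1) by (rule Least_le)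
  then show "Q (Least P)"
    using assms LeastI by blast
  show "Least P \<le> s" if "Q s" for s
    using assms that by (metis LeastI Least_le le_trans nat_le_linear)
qed

lemma middle_meets_before:
  assumes "h1 < h2" "h2 < h3" "even (h2 - h1)" "even (h3 - h2)"
    "length b = length a" "meets h1 a h3 c u"
  shows "\<exists>k\<le>u. meets h1 a h2 b k \<or> meets h2 b h3 c k"
proof (cases "height h2 b u \<le> height h1 a u")
  case True
  have "\<exists>k\<le>u. height h2 b k - height h1 a k = 0"
    by (rule zero_crossing_even_steps)
      (use assms True height_diff_Suc_ge even_height_diff in auto)
  then show ?thesis
    using assms(5,6) unfolding meets_def by force
next
  case False
  have "\<exists>k\<le>u. height h3 c k - height h2 b k = 0"
    by (rule zero_crossing_even_steps)
      (use assms False height_diff_Suc_ge even_height_diff in \<open>auto simp: meets_def\<close>)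
  then show ?thesis
    using assms(5,6) unfolding meets_def by force
qed

definition first_meeting :: "int \<Rightarrow> int \<Rightarrow> int \<Rightarrow> bool list \<Rightarrow> bool list \<Rightarrow> bool list \<Rightarrow> nat" where
  "first_meeting h1 h2 h3 a b c = (LEAST t. meets h1 a h2 b t \<or> meets h2 b h3 c t)"

text \<open>If no pair ever meets, t is an unspecified value at which neither pair meets, so the triple
is left unchanged.\<close>

definition exchange ::
  "int \<Rightarrow> int \<Rightarrow> int \<Rightarrow> bool list \<times> bool list \<times> bool list \<Rightarrow> bool list \<times> bool list \<times> bool list" where
  "exchange h1 h2 h3 = (\<lambda>(a, b, c). let t = first_meeting h1 h2 h3 a b c in
     if meets h1 a h2 b t then (swap_tail t a b, swap_tail t b a, c)
     else if meets h2 b h3 c t then (a, swap_tail t b c, swap_tail t c b)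
     else (a, b, c))"

lemma first_meeting_meets:
  assumes "meets h1 a h2 b t \<or> meets h2 b h3 c t"
  shows "meets h1 a h2 b (first_meeting h1 h2 h3 a b c) \<or> meets h2 b h3 c (first_meeting h1 h2 h3 a b c)"
    and "first_meeting h1 h2 h3 a b c \<le> t"
  using assms LeastI[of "\<lambda>s. meets h1 a h2 b s \<or> meets h2 b h3 c s" t]
  unfolding first_meeting_def by (auto intro: Least_le)

lemma exchange_walks:
  assumes "x \<in> walks n \<times> walks n \<times> walks n"
  shows "exchange h1 h2 h3 x \<in> walks n \<times> walks n \<times> walks n"
  using assms
  by (auto simp: exchange_def Let_def walks_def meets_def length_swap_tail split: prod.splits)

lemma exchange_keeps_prefix:
  assumes "length b = length a" "length c = length a"
    and "meets h1 a h2 b t \<or> meets h2 b h3 c t" "t = first_meeting h1 h2 h3 a b c"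
    and "exchange h1 h2 h3 (a, b, c) = (a', b', c')"
  shows "take t a' = take t a \<and> take t b' = take t b \<and> take t c' = take t c \<and>
    length a' = length a \<and> length b' = length a \<and> length c' = length a"
proof -
  have "t \<le> length a"
    using assms(1,3) by (auto simp: meets_def)
  moreover have "(a', b', c') = (if meets h1 a h2 b t then (swap_tail t a b, swap_tail t b a, c)
      else (a, swap_tail t b c, swap_tail t c b))"
    using assms(3-5) by (auto simp: exchange_def Let_def)
  ultimately show ?thesis
    using assms(1,2) by (auto simp: take_swap_tail length_swap_tail split: if_splits)
qed

lemma exchange_exchange:
  assumes "x \<in> walks n \<times> walks n \<times> walks n"
  shows "exchange h1 h2 h3 (exchange h1 h2 h3 x) = x"
proof -
  obtain a b c where x: "x = (a, b, c)" and len: "length b = length a" "length c = length a"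
    using assms by (auto simp: walks_def)
  obtain a' b' c' where x': "exchange h1 h2 h3 x = (a', b', c')"
    by (metis prod_cases3)
  define t where "t = first_meeting h1 h2 h3 a b c"
  show ?thesis
  proof (cases "meets h1 a h2 b t \<or> meets h2 b h3 c t")
    case False
    then have "\<not> meets h1 a h2 b s \<and> \<not> meets h2 b h3 c s" for s
      using first_meeting_meets(1) t_def by blast
    then show ?thesis
      using x by (simp add: exchange_def Let_def)
  next
    case met: True
    then have "t \<le> length a"
      using len by (auto simp: meets_def)
    note prefix = exchange_keeps_prefix[OF len met t_def x'[unfolded x]]
    have same12: "meets h1 a' h2 b' s \<longleftrightarrow> meets h1 a h2 b s"
      and same23: "meets h2 b' h3 c' s \<longleftrightarrow> meets h2 b h3 c s" if "s \<le> t" for s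
      using prefix len that meets_eq_if_take_eq[of t a' a b' b s] meets_eq_if_take_eq[of t b' b c' c s]
      by auto
    have "first_meeting h1 h2 h3 a' b' c' = t"
      unfolding t_def first_meeting_def
      by (rule sym, rule Least_eq_if_agree_upto[where t = t]) (use met same12 same23 in auto)
    then have again: "exchange h1 h2 h3 (a', b', c') =
        (if meets h1 a h2 b t then (swap_tail t a' b', swap_tail t b' a', c')
         else (a', swap_tail t b' c', swap_tail t c' b'))"
      using met same12[OF order_refl] same23[OF order_refl] by (auto simp: exchange_def Let_def)
    have "(a', b', c') = (if meets h1 a h2 b t then (swap_tail t a b, swap_tail t b a, c)
        else (a, swap_tail t b c, swap_tail t c b))"
      using x x' met by (auto simp: exchange_def Let_def t_def)
    then show ?thesis
      using x x' again \<open>t \<le> length a\<close> len by (simp add: swap_tail_swap_tail split: if_splits)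
  qed
qed

lemma exchange_outer_walks_meet:
  assumes "length b = length a" "length c = length a"
    and "meets h1 a h2 b p" "meets h2 b h3 c q"
    and "exchange h1 h2 h3 (a, b, c) = (a', b', c')"
  shows "\<exists>s. meets h1 a' h3 c' s"
proof -
  define t where "t = first_meeting h1 h2 h3 a b c"
  have "t \<le> p" "t \<le> q" and met: "meets h1 a h2 b t \<or> meets h2 b h3 c t"
    using first_meeting_meets[of h1 a h2 b _ h3 c] assms(3,4) unfolding t_def by blast+
  show ?thesis
  proof (cases "meets h1 a h2 b t")
    case True
    then have "a' = swap_tail t a b" "c' = c"
      using assms(5) by (auto simp: exchange_def Let_def t_def)
    moreover have "height h1 (swap_tail t a b) q = height h2 b q"
      using height_swap_tail_after[OF True \<open>t \<le> q\<close>] .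
    ultimately have "meets h1 a' h3 c' q"
      using True assms(1,4) by (simp add: meets_def length_swap_tail)
    then show ?thesis ..
  next
    case False
    with met have "meets h3 c h2 b t"
      by (simp add: meets_sym)
    moreover from False met have "a' = a" "c' = swap_tail t c b"
      using assms(5) by (auto simp: exchange_def Let_def t_def)
    ultimately have "meets h1 a' h3 c' p"
      using height_swap_tail_after[of h3 c h2 b t p] \<open>t \<le> p\<close> assms(1-3)
      by (simp add: meets_def length_swap_tail)
    then show ?thesis ..
  qed
qed

lemma exchange_middle_walk_meets_both:
  assumes "h1 < h2" "h2 < h3" "even (h2 - h1)" "even (h3 - h2)"
    and "length b = length a" "length c = length a"
    and "meets h1 a h3 c u"
    and "exchange h1 h2 h3 (a, b, c) = (a', b', c')"
  shows "(\<exists>s. meets h1 a' h2 b' s) \<and> (\<exists>s. meets h2 b' h3 c' s)"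
proof -
  define t where "t = first_meeting h1 h2 h3 a b c"
  obtain k where "k \<le> u" "meets h1 a h2 b k \<or> meets h2 b h3 c k"
    using middle_meets_before[OF assms(1-5,7)] by blast
  then have "t \<le> u" and met: "meets h1 a h2 b t \<or> meets h2 b h3 c t"
    using first_meeting_meets[of h1 a h2 b k h3 c] unfolding t_def by auto
  show ?thesis
  proof (cases "meets h1 a h2 b t")
    case True
    then have e: "a' = swap_tail t a b" "b' = swap_tail t b a" "c' = c"
      using assms(8) by (auto simp: exchange_def Let_def t_def)
    have "meets h1 a' h2 b' t"
      using meets_swap_tail_at[OF True] e by simp
    moreover have "height h2 b' u = height h1 a u"
      using height_swap_tail_after[of h2 b h1 a t u] True \<open>t \<le> u\<close> e by (simp add: meets_sym)
    then have "meets h2 b' h3 c' u"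
      using True assms(5-7) e by (simp add: meets_def length_swap_tail)
    ultimately show ?thesis by blast
  next
    case False
    with met have met23: "meets h2 b h3 c t" by simp
    with False have e: "a' = a" "b' = swap_tail t b c" "c' = swap_tail t c b"
      using assms(8) by (auto simp: exchange_def Let_def t_def)
    have "meets h2 b' h3 c' t"
      using meets_swap_tail_at[OF met23] e by simp
    moreover have "height h2 b' u = height h3 c u"
      using height_swap_tail_after[OF met23 \<open>t \<le> u\<close>] e by simp
    then have "meets h1 a' h2 b' u"
      using met23 assms(5-7) e by (simp add: meets_def length_swap_tail)
    ultimately show ?thesis by blast
  qed
qed

definition triples_middle_meets_both ::
  "int \<Rightarrow> int \<Rightarrow> int \<Rightarrow> nat \<Rightarrow> (bool list \<times> bool list \<times> bool list) set" where
  "triples_middle_meets_both h1 h2 h3 n = {(a, b, c) \<in> walks n \<times> walks n \<times> walks n.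
     intersect h1 a h2 b \<and> intersect h2 b h3 c}"

definition triples_outer_meet ::
  "int \<Rightarrow> int \<Rightarrow> nat \<Rightarrow> (bool list \<times> bool list \<times> bool list) set" where
  "triples_outer_meet h1 h3 n = {(a, b, c) \<in> walks n \<times> walks n \<times> walks n. intersect h1 a h3 c}"

lemma bij_betw_exchange:
  assumes "h1 < h2" "h2 < h3" "even (h2 - h1)" "even (h3 - h2)"
  shows "bij_betw (exchange h1 h2 h3) (triples_middle_meets_both h1 h2 h3 n) (triples_outer_meet h1 h3 n)"
proof (rule bij_betw_byWitness[where f' = "exchange h1 h2 h3"])
  show "\<forall>x\<in>triples_middle_meets_both h1 h2 h3 n. exchange h1 h2 h3 (exchange h1 h2 h3 x) = x"
    "\<forall>x\<in>triples_outer_meet h1 h3 n. exchange h1 h2 h3 (exchange h1 h2 h3 x) = x"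
    using exchange_exchange by (auto simp: triples_middle_meets_both_def triples_outer_meet_def)
  show "exchange h1 h2 h3 ` triples_middle_meets_both h1 h2 h3 n \<subseteq> triples_outer_meet h1 h3 n"
  proof (rule image_subsetI)
    fix x assume "x \<in> triples_middle_meets_both h1 h2 h3 n"
    then obtain a b c where "x = (a, b, c)" "x \<in> walks n \<times> walks n \<times> walks n"
      and "\<exists>p. meets h1 a h2 b p" "\<exists>q. meets h2 b h3 c q"
      by (auto simp: triples_middle_meets_both_def intersect_iff_meets)
    moreover obtain a' b' c' where "exchange h1 h2 h3 x = (a', b', c')"
      by (metis prod_cases3)
    ultimately show "exchange h1 h2 h3 x \<in> triples_outer_meet h1 h3 n"
      using exchange_walks[of x n h1 h2 h3] exchange_outer_walks_meet[of b a c]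
      by (auto simp: triples_outer_meet_def walks_def intersect_iff_meets)
  qed
  show "exchange h1 h2 h3 ` triples_outer_meet h1 h3 n \<subseteq> triples_middle_meets_both h1 h2 h3 n"
  proof (rule image_subsetI)
    fix x assume "x \<in> triples_outer_meet h1 h3 n"
    then obtain a b c u where "x = (a, b, c)" "x \<in> walks n \<times> walks n \<times> walks n"
      and "meets h1 a h3 c u"
      by (auto simp: triples_outer_meet_def intersect_iff_meets)
    moreover obtain a' b' c' where "exchange h1 h2 h3 x = (a', b', c')"
      by (metis prod_cases3)
    ultimately show "exchange h1 h2 h3 x \<in> triples_middle_meets_both h1 h2 h3 n"
      using exchange_walks[of x n h1 h2 h3] exchange_middle_walk_meets_both[OF assms, of b a c]
      by (auto simp: triples_middle_meets_both_def walks_def intersect_iff_meets)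
  qed
qed

theorem theorem2p1:
  fixes i j n :: nat
  assumes "i \<ge> 1" and "j \<ge> 1" and "n \<ge> 1"
  shows "\<exists>f. bij_betw f (M12_23 i j n) (M13 i j n)"
proof -
  have "M12_23 i j n = triples_middle_meets_both 0 (2 * int i) (2 * int i + 2 * int j) n"
    "M13 i j n = triples_outer_meet 0 (2 * int i + 2 * int j) n"
    by (simp_all add: M12_23_def M13_def U_def triples_middle_meets_both_def triples_outer_meet_def)
  moreover have "bij_betw (exchange 0 (2 * int i) (2 * int i + 2 * int j))
      (triples_middle_meets_both 0 (2 * int i) (2 * int i + 2 * int j) n)
      (triples_outer_meet 0 (2 * int i + 2 * int j) n)"
    by (rule bij_betw_exchange) (use assms(1,2) in auto)
  ultimately show ?thesis
    by auto
qed

end
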